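(* Let $G$ be a flag with vertices $v_1,\dots,v_n$ ordered by increasing $x$-coordinate, and let $i<j<k$. If $(v_i,v_j,v_k)$ is a good upper triplet, then every edge of $G[V^-(v_jv_k)]$ is disjoint from $v_iv_j$ and related to $v_iv_j$. If $(v_i,v_j,v_k)$ is a good lower triplet, then every edge of $G[V^+(v_jv_k)]$ is disjoint from $v_iv_j$ and related to $v_iv_j$.
   Context: Let $\mathcal C=S^1\times\mathbb R$ ($S^1=[0,1]$ with $0\sim1$), points $p=(p_x,p_y)$ with $0\le p_x<1$. A flag is a graph drawn on $\mathcal C$ (vertices distinct points, edges Jordan arcs, no overlapping edges, no edge through a vertex) that is complete, simple (any two edges meet in at most one point: a common endpoint or a proper crossing), monotone (every edge meets each vertical line $l_{x=a}=\{p:p_x=a\}$ at most once, no two vertices share an $x$-coordinate, no vertex has $x$-coordinate $0$), and such that $l_{x=0}$ meets every edge in its relative interior. A point $v$ is related to an $x$-monotone curve $e$ if $l_{x=v_x}$ meets $e$ in its relative interior; then $v$ is below (above) $e$ if $v_y$ is smaller (larger) than the $y$-coordinate of $l_{x=v_x}\cap e$. Two $x$-monotone curves $e,f$ are related if they do not cross, some vertical line meets both relative interiors, and all such lines meet them in the same vertical order; then $e\prec f$ means that on every vertical line meeting both relative interiors, $e$'s point has $y$-coordinate at most that of $f$'s point. For $i<j$, $V^+(v_iv_j)=\{v_s: s>j,\ v_s \text{ above } v_iv_j\}$ and $V^-(v_iv_j)=\{v_s: s>j,\ v_s \text{ below } v_iv_j\}$. For $i<j<k$, $(v_i,v_j,v_k)$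 is a good upper triplet if $v_jv_k\prec v_iv_j$ and $|V^+(v_jv_k)|\le1$, and a good lower triplet if $v_iv_j\prec v_jv_k$ and $|V^-(v_jv_k)|\le1$. Two edges are disjoint if they share no point; $G[U]$ denotes the induced subgraph. *)

theory Defs
  imports "HOL-Analysis.Analysis"
begin

text \<open>The cylinder S^1 x R, embedded as (unit circle in C) x R.
  A point p corresponds to the paper's (p_x, p_y) with fst p = cis (2 pi p_x), snd p = p_y.\<close>

type_synonym pt = "complex \<times> real"

definition Cyl :: "pt set" where
  "Cyl = {p. norm (fst p) = 1}"

definition xc :: "pt \<Rightarrow> real" where
  "xc p = (THE x. 0 \<le> x \<and> x < 1 \<and> cis (2 * pi * x) = fst p)"

definition yc :: "pt \<Rightarrow> real" where
  "yc p = snd p"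

definition vline :: "real \<Rightarrow> pt set" where
  "vline a = {p. fst p = cis (2 * pi * a)}"

definition relint :: "(real \<Rightarrow> pt) \<Rightarrow> pt set" where
  "relint g = g ` {0<..<1}"

definition xmono :: "(real \<Rightarrow> pt) \<Rightarrow> bool" where
  "xmono g \<longleftrightarrow> arc g \<and> path_image g \<subseteq> Cyl \<and>
     (\<forall>a p q. p \<in> path_image g \<inter> vline a \<and> q \<in> path_image g \<inter> vline a \<longrightarrow> p = q)"

definition on_line :: "(real \<Rightarrow> pt) \<Rightarrow> real \<Rightarrow> real \<Rightarrow> bool" where
  "on_line e a y \<longleftrightarrow> (cis (2 * pi * a), y) \<in> relint e"

definition pt_related :: "pt \<Rightarrow> (real \<Rightarrow> pt) \<Rightarrow> bool" where
  "pt_related v e \<longleftrightarrow> vline (xc v) \<inter> relint e \<noteq> {}"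

definition below :: "pt \<Rightarrow> (real \<Rightarrow> pt) \<Rightarrow> bool" where
  "below v e \<longleftrightarrow> pt_related v e \<and> (\<exists>y. on_line e (xc v) y \<and> yc v < y)"

definition above :: "pt \<Rightarrow> (real \<Rightarrow> pt) \<Rightarrow> bool" where
  "above v e \<longleftrightarrow> pt_related v e \<and> (\<exists>y. on_line e (xc v) y \<and> y < yc v)"

text \<open>Proper crossing of two x-monotone curves at a common relative-interior point p:
  the vertical order of the two curves (strictly) swaps when passing through p.\<close>
definition cross_at :: "(real \<Rightarrow> pt) \<Rightarrow> (real \<Rightarrow> pt) \<Rightarrow> pt \<Rightarrow> bool" where
  "cross_at e f p \<longleftrightarrow> p \<in> relint e \<inter> relint f \<and>
     (\<exists>\<epsilon>>0. \<forall>s t. 0 < s \<and> s < \<epsilon> \<and> 0 < t \<and> t < \<epsilon> \<longrightarrow>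
        (\<exists>ye yf ye' yf'. on_line e (xc p - s) ye \<and> on_line f (xc p - s) yf \<and>
           on_line e (xc p + t) ye' \<and> on_line f (xc p + t) yf' \<and>
           (ye - yf) * (ye' - yf') < 0))"

definition crosses :: "(real \<Rightarrow> pt) \<Rightarrow> (real \<Rightarrow> pt) \<Rightarrow> bool" where
  "crosses e f \<longleftrightarrow> (\<exists>p. cross_at e f p)"

definition related :: "(real \<Rightarrow> pt) \<Rightarrow> (real \<Rightarrow> pt) \<Rightarrow> bool" where
  "related e f \<longleftrightarrow> \<not> crosses e f \<and>
     (\<exists>a ye yf. on_line e a ye \<and> on_line f a yf) \<and>
     ((\<forall>a ye yf. on_line e a ye \<and> on_line f a yf \<longrightarrow> ye \<le> yf) \<or>
      (\<forall>a ye yf. on_line e a ye \<and> on_line f a yf \<longrightarrow> yf \<le> ye))"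

text \<open>e \<prec> f (only meaningful for related curves, so relatedness is part of it).\<close>
definition prec :: "(real \<Rightarrow> pt) \<Rightarrow> (real \<Rightarrow> pt) \<Rightarrow> bool" where
  "prec e f \<longleftrightarrow> related e f \<and>
     (\<forall>a ye yf. on_line e a ye \<and> on_line f a yf \<longrightarrow> ye \<le> yf)"

definition flag :: "nat \<Rightarrow> (nat \<Rightarrow> pt) \<Rightarrow> (nat \<Rightarrow> nat \<Rightarrow> real \<Rightarrow> pt) \<Rightarrow> bool" where
  "flag n v E \<longleftrightarrow>
     (\<forall>i\<in>{1..n}. v i \<in> Cyl) \<and> inj_on v {1..n} \<and>
     (\<forall>i\<in>{1..n}. xc (v i) \<noteq> 0) \<and>
     (\<forall>i j. 1 \<le> i \<and> i < j \<and> j \<le> n \<longrightarrow> xc (v i) < xc (v j)) \<and>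
     (\<forall>i j. 1 \<le> i \<and> i < j \<and> j \<le> n \<longrightarrow>
        xmono (E i j) \<and> pathstart (E i j) = v i \<and> pathfinish (E i j) = v j \<and>
        (\<forall>k\<in>{1..n}. k \<noteq> i \<and> k \<noteq> j \<longrightarrow> v k \<notin> path_image (E i j)) \<and>
        vline 0 \<inter> relint (E i j) \<noteq> {}) \<and>
     (\<forall>i j s t. 1 \<le> i \<and> i < j \<and> j \<le> n \<and> 1 \<le> s \<and> s < t \<and> t \<le> n \<and> (i, j) \<noteq> (s, t) \<longrightarrow>
        (\<forall>p q. p \<in> path_image (E i j) \<inter> path_image (E s t) \<and>
               q \<in> path_image (E i j) \<inter> path_image (E s t) \<longrightarrow> p = q) \<and>
        (\<forall>p \<in> path_image (E i j) \<inter> path_image (E s t).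
           (\<exists>m \<in> {i, j} \<inter> {s, t}. p = v m) \<or> cross_at (E i j) (E s t) p))"

definition Vplus :: "nat \<Rightarrow> (nat \<Rightarrow> pt) \<Rightarrow> (nat \<Rightarrow> nat \<Rightarrow> real \<Rightarrow> pt) \<Rightarrow> nat \<Rightarrow> nat \<Rightarrow> nat set" where
  "Vplus n v E i j = {s. j < s \<and> s \<le> n \<and> above (v s) (E i j)}"

definition Vminus :: "nat \<Rightarrow> (nat \<Rightarrow> pt) \<Rightarrow> (nat \<Rightarrow> nat \<Rightarrow> real \<Rightarrow> pt) \<Rightarrow> nat \<Rightarrow> nat \<Rightarrow> nat set" where
  "Vminus n v E i j = {s. j < s \<and> s \<le> n \<and> below (v s) (E i j)}"

definition good_upper :: "nat \<Rightarrow> (nat \<Rightarrow> pt) \<Rightarrow> (nat \<Rightarrow> nat \<Rightarrow> real \<Rightarrow> pt) \<Rightarrow> nat \<Rightarrow> nat \<Rightarrow> nat \<Rightarrow> bool" where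
  "good_upper n v E i j k \<longleftrightarrow> prec (E j k) (E i j) \<and> card (Vplus n v E j k) \<le> 1"

definition good_lower :: "nat \<Rightarrow> (nat \<Rightarrow> pt) \<Rightarrow> (nat \<Rightarrow> nat \<Rightarrow> real \<Rightarrow> pt) \<Rightarrow> nat \<Rightarrow> nat \<Rightarrow> nat \<Rightarrow> bool" where
  "good_lower n v E i j k \<longleftrightarrow> prec (E i j) (E j k) \<and> card (Vminus n v E j k) \<le> 1"

end

theory Submission
  imports Defs
begin

text \<open>Unrolling the cylinder, every edge v_pv_q, being x-monotone and crossing l_{x=0}, is the graph
  of a continuous height function over [x_q - 1, x_p]. Take the upper case; the lower one is its
  mirror image under y \<mapsto> -y. The edge v_sv_t starts and ends below v_jv_k, and it is still below
  v_jv_k at x_j: otherwise it would meet v_jv_k twice, or meet v_kv_s away from v_s. As v_jv_k lies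
  strictly below v_iv_j wherever both are defined, v_sv_t is below v_iv_j at the ends of both
  x-ranges they share. A common point would be a proper crossing, hence a change of sign, and there
  is at most one; so v_sv_t stays strictly below v_iv_j.\<close>

section \<open>Angles on the cylinder\<close>

lemma cis_2pi_eq_iff: "cis (2*pi*a) = cis (2*pi*b) \<longleftrightarrow> (\<exists>k::int. a = b + k)"
proof -
  have "cis (2*pi*a) = cis (2*pi*b) \<longleftrightarrow> (\<exists>k::int. 2*pi*a = 2*pi*b + 2*pi * of_int k)"
    using sin_cos_eq_iff[of "2*pi*a" "2*pi*b"] by (auto simp: complex_eq_iff)
  also have "\<dots> \<longleftrightarrow> (\<exists>k::int. a = b + k)"
    by (simp flip: distrib_left)
  finally show ?thesis .
qed

lemma cis_2pi_eq_imp_eq: "cis (2*pi*a) = cis (2*pi*b) \<Longrightarrow> \<bar>a - b\<bar> < 1 \<Longrightarrow> a = b"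
  by (auto simp: cis_2pi_eq_iff)

lemma cis_2pi_minus_one [simp]: "cis (2*pi*(u - 1)) = cis (2*pi*u)"
  unfolding cis_2pi_eq_iff by (rule exI[of _ "-1"]) simp

lemma cis_2pi_eq_shift: "cis (2*pi*a) = cis (2*pi*b) \<Longrightarrow> cis (2*pi*(a + c)) = cis (2*pi*(b + c))"
  by (auto simp: cis_2pi_eq_iff)

lemma xc_Cyl:
  assumes "p \<in> Cyl"
  shows "0 \<le> xc p" "xc p < 1" "cis (2*pi*xc p) = fst p"
proof -
  have "norm (fst p) = 1" using assms by (simp add: Cyl_def)
  then have "cis (Arg (fst p)) = fst p"
    using cis_Arg[of "fst p"] by (fastforce simp: sgn_div_norm)
  define x where "x = Arg (fst p) / (2*pi) + (if Arg (fst p) < 0 then 1 else 0)"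
  have x01: "0 \<le> x \<and> x < 1"
    using Arg_bounded[of "fst p"] pi_gt_zero by (auto simp: x_def field_simps)
  have "cis (2*pi*x) = cis (2*pi*(Arg (fst p) / (2*pi)))"
    unfolding cis_2pi_eq_iff x_def by (rule exI[of _ "if Arg (fst p) < 0 then 1 else 0"]) auto
  with \<open>cis (Arg (fst p)) = fst p\<close> have cx: "cis (2*pi*x) = fst p" by simp
  have "xc p = x" unfolding xc_def
  proof (rule the_equality)
    fix y assume "0 \<le> y \<and> y < 1 \<and> cis (2*pi*y) = fst p"
    then show "y = x" using x01 cx cis_2pi_eq_imp_eq[of y x] by auto
  qed (use x01 cx in auto)
  then show "0 \<le> xc p" "xc p < 1" "cis (2*pi*xc p) = fst p" using x01 cx by auto
qed

lemma Cyl_eq_cis_xc: "p \<in> Cyl \<Longrightarrow> p = (cis (2*pi*xc p), yc p)"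
  using xc_Cyl(3)[of p] by (simp add: yc_def prod_eq_iff)

section \<open>x-monotone arcs as graphs of height functions\<close>

definition cyl_graph :: "(real \<Rightarrow> real) \<Rightarrow> real set \<Rightarrow> pt set" where
  "cyl_graph H U = (\<lambda>u. (cis (2*pi*u), H u)) ` U"

definition height_fun :: "(real \<Rightarrow> pt) \<Rightarrow> real \<Rightarrow> real \<Rightarrow> (real \<Rightarrow> real) \<Rightarrow> bool" where
  "height_fun g l r H \<longleftrightarrow> continuous_on {l..r} H \<and>
     path_image g = cyl_graph H {l..r} \<and> relint g = cyl_graph H {l<..<r}"

lemma cyl_graph_memI: "u \<in> U \<Longrightarrow> (cis (2*pi*u), H u) \<in> cyl_graph H U"
  by (auto simp: cyl_graph_def)

lemma relint_subset_path_image: "relint g \<subseteq> path_image g"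
  by (auto simp: relint_def path_image_def)

lemma arc_pathfinish_notin_relint: "arc g \<Longrightarrow> pathfinish g \<notin> relint g"
  by (auto simp: arc_def relint_def pathfinish_def dest: inj_onD)

lemma path_Cyl_angle_lift:
  assumes "path g" "path_image g \<subseteq> Cyl" "fst (pathstart g) = cis (2*pi*x0)"
  obtains \<theta> where "continuous_on {0..1} \<theta>" "\<theta> 0 = x0"
    "\<And>t. t \<in> {0..1} \<Longrightarrow> fst (g t) = cis (2*pi*\<theta> t)"
proof -
  have cont: "continuous_on {0..1} (\<lambda>t. fst (g t))"
    using assms(1) unfolding path_def by (intro continuous_intros)
  have norm1: "norm (fst (g t)) = 1" if "t \<in> {0..1}" for t
    using assms(2) that by (force simp: Cyl_def path_image_def)
  obtain L where contL: "continuous_on {0..1} L" and L: "\<And>t. t \<in> {0..1} \<Longrightarrow> fst (g t) = exp (L t)"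
    using continuous_logarithm_on_contractible[OF cont convex_imp_contractible[OF convex_real_interval(5)]]
      norm1 by (metis norm_zero zero_neq_one)
  have gL: "fst (g t) = cis (Im (L t))" if "t \<in> {0..1}" for t
    using L[OF that] norm1[OF that] by (simp add: exp_eq_polar norm_mult)
  obtain k :: int where k: "Im (L 0) / (2*pi) = x0 + k"
    using gL[of 0] assms(3) cis_2pi_eq_iff[of "Im (L 0) / (2*pi)" x0] by (auto simp: pathstart_def)
  show thesis
  proof
    show "continuous_on {0..1} (\<lambda>t. Im (L t) / (2*pi) - k)"
      by (intro continuous_intros contL) simp
    show "Im (L 0) / (2*pi) - k = x0" using k by simp
    fix t :: real assume "t \<in> {0..1}"
    have "cis (2*pi*(Im (L t) / (2*pi) - k)) = cis (2*pi*(Im (L t) / (2*pi)))"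
      unfolding cis_2pi_eq_iff by (rule exI[of _ "-k"]) simp
    then show "fst (g t) = cis (2*pi*(Im (L t) / (2*pi) - k))" using gL[OF \<open>t \<in> {0..1}\<close>] by simp
  qed
qed

lemma xmono_lift_inj_mod_int:
  assumes "xmono e" "\<And>t. t \<in> {0..1} \<Longrightarrow> fst (e t) = cis (2*pi*\<theta> t)"
    and "t1 \<in> {0..1}" "t2 \<in> {0..1}" "\<theta> t1 = \<theta> t2 + of_int k"
  shows "t1 = t2"
proof -
  have "e t1 \<in> path_image e \<inter> vline (\<theta> t1)" "e t2 \<in> path_image e \<inter> vline (\<theta> t1)"
    using assms(2-5) cis_2pi_eq_iff[of "\<theta> t1" "\<theta> t2"] by (auto simp: path_image_def vline_def)
  then have "e t1 = e t2" using assms(1) unfolding xmono_def by blast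
  then show ?thesis using assms(1,3,4) by (auto simp: xmono_def arc_def dest: inj_onD)
qed

text \<open>Crossing the line l_{x=0} forces the lift to wind backwards, from x_a down to x_b - 1.\<close>
lemma lift_end_below_start:
  fixes \<theta> :: "real \<Rightarrow> real"
  assumes cont: "continuous_on {0..1} \<theta>"
    and inj: "\<And>t1 t2 k. t1 \<in> {0..1} \<Longrightarrow> t2 \<in> {0..1} \<Longrightarrow> \<theta> t1 = \<theta> t2 + of_int k \<Longrightarrow> t1 = t2"
    and start: "\<theta> 0 = xa" and finish: "\<theta> 1 = xb + of_int m"
    and x: "0 < xa" "xa < xb" "xb < 1"
    and t0: "t0 \<in> {0<..<1}" "\<theta> t0 \<in> \<int>"
  shows "\<theta> 1 = xb - 1"
proof -
  have inj0: "inj_on \<theta> {0..1}" using inj[where k=0] by (auto intro: inj_onI)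
  have img: "\<theta> ` {0..1} = closed_segment xa (xb + m)" "\<theta> ` {0<..<1} = open_segment xa (xb + m)"
    using continuous_injective_image_segment_1[of 0 1 \<theta>] continuous_injective_image_open_segment_1[of 0 1 \<theta>]
      cont inj0 start finish by (simp_all add: closed_segment_eq_real_ivl1 open_segment_eq_real_ivl)
  have "\<bar>xb + m - xa\<bar> < 1"
  proof (rule ccontr)
    assume "\<not> ?thesis"
    then have "xa + 1 \<in> closed_segment xa (xb + m) \<or> xa + (-1) \<in> closed_segment xa (xb + m)"
      by (auto simp: closed_segment_eq_real_ivl)
    then obtain \<sigma> :: int where "\<sigma> \<noteq> 0" "xa + \<sigma> \<in> closed_segment xa (xb + m)"
      by (metis of_int_1 of_int_minus zero_neq_one neg_equal_0_iff_equal)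
    then obtain t where "t \<in> {0..1}" "\<theta> t = \<theta> 0 + of_int \<sigma>"
      using img(1) start by (metis imageE)
    then show False using inj[of t 0 \<sigma>] \<open>\<sigma> \<noteq> 0\<close> by auto
  qed
  then have "m = 0 \<or> m = -1" using x by linarith
  moreover have "m \<noteq> 0"
  proof
    assume "m = 0"
    then have "\<theta> t0 \<in> {xa<..<xb}" using img(2) t0(1) x by (auto simp: open_segment_eq_real_ivl)
    moreover obtain z :: int where "\<theta> t0 = z" using t0(2) by (auto elim: Ints_cases)
    ultimately have "0 < z" "z < 1" using x by simp_all
    then show False by simp
  qed
  ultimately show ?thesis using finish by simp
qed

lemma lift_reparametrize_graph:
  fixes g :: "real \<Rightarrow> pt" and \<theta> :: "real \<Rightarrow> real"
  assumes contg: "continuous_on {0..1} g" and cont: "continuous_on {0..1} \<theta>" and inj: "inj_on \<theta> {0..1}"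
    and ends: "\<theta> 0 = r" "\<theta> 1 = l" "l < r"
    and lift: "\<And>t. t \<in> {0..1} \<Longrightarrow> fst (g t) = cis (2*pi*\<theta> t)"
  obtains H where "continuous_on {l..r} H"
    "g ` {0..1} = cyl_graph H {l..r}" "g ` {0<..<1} = cyl_graph H {l<..<r}"
    "\<And>t. t \<in> {0..1} \<Longrightarrow> H (\<theta> t) = snd (g t)"
proof -
  have img: "\<theta> ` {0..1} = {l..r}" "\<theta> ` {0<..<1} = {l<..<r}"
    using continuous_injective_image_segment_1[of 0 1 \<theta>] continuous_injective_image_open_segment_1[of 0 1 \<theta>]
      cont inj ends by (simp_all add: closed_segment_eq_real_ivl open_segment_eq_real_ivl)
  define \<psi> where "\<psi> = inv_into {0..1} \<theta>"
  have \<psi>\<theta>: "\<psi> (\<theta> t) = t" if "t \<in> {0..1}" for t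
    unfolding \<psi>_def using inv_into_f_f[OF inj that] .
  have cont\<psi>: "continuous_on {l..r} \<psi>"
    using continuous_on_inv[OF cont compact_Icc] \<psi>\<theta> img(1) by metis
  have \<psi>_range: "\<psi> ` {l..r} \<subseteq> {0..1}"
    unfolding img(1)[symmetric] using \<psi>\<theta> by (auto simp: image_image)
  define H where "H u = snd (g (\<psi> u))" for u
  have g_eq: "g t = (cis (2*pi*\<theta> t), H (\<theta> t))" if "t \<in> {0..1}" for t
    using lift[OF that] \<psi>\<theta>[OF that] by (simp add: H_def prod_eq_iff)
  have g_img: "g ` A = cyl_graph H (\<theta> ` A)" if "A \<subseteq> {0..1}" for A
    using that g_eq by (force simp: cyl_graph_def image_image)
  show thesis
  proof
    show "continuous_on {l..r} H"
      unfolding H_def by (intro continuous_intros continuous_on_compose2[OF contg cont\<psi> \<psi>_range])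
    show "g ` {0..1} = cyl_graph H {l..r}" "g ` {0<..<1} = cyl_graph H {l<..<r}"
      using g_img[of "{0..1}"] g_img[of "{0<..<1}"] img by (auto simp: subset_eq)
    show "H (\<theta> t) = snd (g t)" if "t \<in> {0..1}" for t
      using \<psi>\<theta>[OF that] by (simp add: H_def)
  qed
qed

lemma xmono_graph:
  assumes xm: "xmono e" and v0: "vline 0 \<inter> relint e \<noteq> {}"
    and start: "pathstart e = (cis (2*pi*xa), ya)" and finish: "pathfinish e = (cis (2*pi*xb), yb)"
    and x: "0 < xa" "xa < xb" "xb < 1"
  obtains H where "height_fun e (xb-1) xa H" "H xa = ya" "H (xb-1) = yb"
proof -
  have arc: "arc e" and onC: "path_image e \<subseteq> Cyl" using xm by (auto simp: xmono_def)
  obtain \<theta> where cont: "continuous_on {0..1} \<theta>" and \<theta>0: "\<theta> 0 = xa"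
    and lift: "\<And>t. t \<in> {0..1} \<Longrightarrow> fst (e t) = cis (2*pi*\<theta> t)"
    using path_Cyl_angle_lift[OF arc_imp_path[OF arc] onC] start by auto
  have inj_mod: "t1 = t2" if "t1 \<in> {0..1}" "t2 \<in> {0..1}" "\<theta> t1 = \<theta> t2 + of_int k" for t1 t2 k
    using xmono_lift_inj_mod_int[of e \<theta> t1 t2 k] xm lift that by blast
  obtain m :: int where m: "\<theta> 1 = xb + m"
    using lift[of 1] finish cis_2pi_eq_iff[of "\<theta> 1" xb] by (auto simp: pathfinish_def)
  obtain t0 where t0: "t0 \<in> {0<..<1}" "fst (e t0) = cis (2*pi*0)"
    using v0 unfolding relint_def vline_def by fastforce
  then have "\<theta> t0 \<in> \<int>"
    using lift[of t0] cis_2pi_eq_iff[of "\<theta> t0" 0] by auto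
  then have \<theta>1: "\<theta> 1 = xb - 1"
    using lift_end_below_start[OF cont _ \<theta>0 m x t0(1)] inj_mod by blast
  have inj: "inj_on \<theta> {0..1}" using inj_mod[where k=0] by (auto intro: inj_onI)
  have contg: "continuous_on {0..1} e" using arc by (simp add: arc_def path_def)
  obtain H where H: "continuous_on {xb-1..xa} H"
      "e ` {0..1} = cyl_graph H {xb-1..xa}" "e ` {0<..<1} = cyl_graph H {xb-1<..<xa}"
      "\<And>t. t \<in> {0..1} \<Longrightarrow> H (\<theta> t) = snd (e t)"
    using lift_reparametrize_graph[OF contg cont inj \<theta>0 \<theta>1 _ lift] x by auto
  have "H xa = ya" using H(4)[of 0] \<theta>0 start by (simp add: pathstart_def)
  moreover have "H (xb-1) = yb" using H(4)[of 1] \<theta>1 finish by (simp add: pathfinish_def)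
  ultimately show thesis
    using that H(1-3) by (simp add: height_fun_def path_image_def relint_def)
qed

lemma on_line_cyl_graph:
  "relint g = cyl_graph H U \<Longrightarrow> on_line g x y \<longleftrightarrow> (\<exists>u\<in>U. cis (2*pi*x) = cis (2*pi*u) \<and> y = H u)"
  by (auto simp: on_line_def cyl_graph_def image_iff)

lemma on_line_height:
  assumes "relint g = cyl_graph H {l<..<r}" "r - l \<le> 1" "u \<in> {l<..<r}" "cis (2*pi*x) = cis (2*pi*u)"
  shows "on_line g x y \<longleftrightarrow> y = H u"
proof -
  have unique: "u' = u" if "u' \<in> {l<..<r}" "cis (2*pi*u') = cis (2*pi*u)" for u'
  proof -
    have "\<bar>u' - u\<bar> < 1" using that(1) assms(2,3) by (auto simp: abs_less_iff)
    then show ?thesis using cis_2pi_eq_imp_eq that(2) by blast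
  qed
  have "on_line g x y \<longleftrightarrow> (\<exists>u'\<in>{l<..<r}. cis (2*pi*x) = cis (2*pi*u') \<and> y = H u')"
    by (rule on_line_cyl_graph[OF assms(1)])
  also have "\<dots> \<longleftrightarrow> y = H u"
    using unique assms(3,4) by metis
  finally show ?thesis .
qed

lemma below_iff_height:
  assumes "relint g = cyl_graph H {l<..<r}" "r - l \<le> 1" "u \<in> {l<..<r}" "cis (2*pi*xc p) = cis (2*pi*u)"
  shows "below p g \<longleftrightarrow> yc p < H u"
proof -
  have "(cis (2*pi*u), H u) \<in> vline (xc p) \<inter> relint g"
    using assms(1,3,4) by (simp add: vline_def cyl_graph_memI)
  then have "pt_related p g" unfolding pt_related_def by blast
  then show ?thesis using on_line_height[OF assms] by (auto simp: below_def)
qed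

lemma above_iff_height:
  assumes "relint g = cyl_graph H {l<..<r}" "r - l \<le> 1" "u \<in> {l<..<r}" "cis (2*pi*xc p) = cis (2*pi*u)"
  shows "above p g \<longleftrightarrow> H u < yc p"
proof -
  have "(cis (2*pi*u), H u) \<in> vline (xc p) \<inter> relint g"
    using assms(1,3,4) by (simp add: vline_def cyl_graph_memI)
  then have "pt_related p g" unfolding pt_related_def by blast
  then show ?thesis using on_line_height[OF assms] by (auto simp: above_def)
qed

lemma prec_heights_less:
  assumes f: "relint f = cyl_graph F {l1<..<r1}" "r1 - l1 \<le> 1"
    and g: "relint g = cyl_graph G {l2<..<r2}" "r2 - l2 \<le> 1"
    and "prec f g" "relint f \<inter> relint g = {}" "u \<in> {l1<..<r1}" "u \<in> {l2<..<r2}"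
  shows "F u < G u"
proof -
  have "F u \<le> G u"
    using assms(5) on_line_height[OF f assms(7) refl] on_line_height[OF g assms(8) refl]
    unfolding prec_def by blast
  moreover have "F u \<noteq> G u"
    using assms(6) cyl_graph_memI[OF assms(7), of F] cyl_graph_memI[OF assms(8), of G] f g by auto
  ultimately show ?thesis by simp
qed

lemma cross_at_height_sign:
  assumes f: "relint f = cyl_graph F {l1<..<r1}" "r1 - l1 \<le> 1"
    and g: "relint g = cyl_graph G {l2<..<r2}" "r2 - l2 \<le> 1"
    and u: "u \<in> {l1<..<r1}" and w: "w \<in> {l2<..<r2}" and uw: "cis (2*pi*w) = cis (2*pi*u)"
    and cross: "cross_at f g (cis (2*pi*u), F u)"
  shows "\<exists>\<epsilon>>0. \<forall>\<delta>. 0 < \<delta> \<and> \<delta> < \<epsilon> \<longrightarrow> (F (u - \<delta>) - G (w - \<delta>)) * (F (u + \<delta>) - G (w + \<delta>)) < 0"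
proof -
  define p where "p = (cis (2*pi*u), F u)"
  have xp: "cis (2*pi*xc p) = cis (2*pi*u)"
    using xc_Cyl(3)[of p] by (simp add: p_def Cyl_def)
  obtain \<epsilon>0 where \<epsilon>0: "\<epsilon>0 > 0" "\<forall>s t. 0 < s \<and> s < \<epsilon>0 \<and> 0 < t \<and> t < \<epsilon>0 \<longrightarrow>
        (\<exists>ye yf ye' yf'. on_line f (xc p - s) ye \<and> on_line g (xc p - s) yf \<and>
           on_line f (xc p + t) ye' \<and> on_line g (xc p + t) yf' \<and> (ye - yf) * (ye' - yf') < 0)"
    using cross unfolding cross_at_def p_def[symmetric] by blast
  define \<epsilon> where "\<epsilon> = min \<epsilon>0 (min (u - l1) (min (r1 - u) (min (w - l2) (r2 - w))))"
  have "\<epsilon> > 0" using \<epsilon>0 u w by (simp add: \<epsilon>_def)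
  moreover have "(F (u - \<delta>) - G (w - \<delta>)) * (F (u + \<delta>) - G (w + \<delta>)) < 0"
    if \<delta>: "0 < \<delta>" "\<delta> < \<epsilon>" for \<delta>
  proof -
    have win: "\<delta> < \<epsilon>0" "u - \<delta> \<in> {l1<..<r1}" "u + \<delta> \<in> {l1<..<r1}"
      "w - \<delta> \<in> {l2<..<r2}" "w + \<delta> \<in> {l2<..<r2}"
      using \<delta> u w unfolding \<epsilon>_def by auto
    obtain ye yf ye' yf' where y: "on_line f (xc p - \<delta>) ye" "on_line g (xc p - \<delta>) yf"
        "on_line f (xc p + \<delta>) ye'" "on_line g (xc p + \<delta>) yf'" "(ye - yf) * (ye' - yf') < 0"
      using \<epsilon>0(2) \<delta>(1) win(1) by blast
    have "cis (2*pi*(xc p - \<delta>)) = cis (2*pi*(u - \<delta>))" "cis (2*pi*(xc p + \<delta>)) = cis (2*pi*(u + \<delta>))"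
      "cis (2*pi*(xc p - \<delta>)) = cis (2*pi*(w - \<delta>))" "cis (2*pi*(xc p + \<delta>)) = cis (2*pi*(w + \<delta>))"
      using cis_2pi_eq_shift[OF xp, of "-\<delta>"] cis_2pi_eq_shift[OF xp, of \<delta>]
        cis_2pi_eq_shift[OF uw, of "-\<delta>"] cis_2pi_eq_shift[OF uw, of \<delta>] by simp_all
    then have "ye = F (u - \<delta>)" "ye' = F (u + \<delta>)" "yf = G (w - \<delta>)" "yf' = G (w + \<delta>)"
      using y(1-4) on_line_height[OF f win(2)] on_line_height[OF f win(3)]
        on_line_height[OF g win(4)] on_line_height[OF g win(5)] by blast+
    then show ?thesis using y(5) by simp
  qed
  ultimately show ?thesis by blast
qed

lemma cis_2pi_eq_window_cases:
  assumes "cis (2*pi*u) = cis (2*pi*w)" "u \<in> {e-1..d}" "w \<in> {b-1..a}"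
    and "0 < a" "a < b" "b < d" "d < e" "e < 1"
  shows "(w = u \<and> u \<le> a) \<or> (w = u - 1 \<and> b \<le> u)"
proof -
  obtain k :: int where k: "u = w + k" using assms(1) cis_2pi_eq_iff by blast
  then have "-2 < real_of_int k" "real_of_int k < 2" using assms(2-8) by auto
  then have "k = -1 \<or> k = 0 \<or> k = 1" by linarith
  then show ?thesis using k assms(2-8) by auto
qed

lemma related_if_sign_ordered:
  assumes "\<not> crosses f g" "on_line f x0 ye0" "on_line g x0 yf0" "\<sigma> * \<sigma> = 1"
    and ordered: "\<And>x ye yf. on_line f x ye \<Longrightarrow> on_line g x yf \<Longrightarrow> \<sigma> * ye < \<sigma> * yf"
  shows "related f g"
proof -
  have "(\<forall>x ye yf. on_line f x ye \<and> on_line g x yf \<longrightarrow> ye \<le> yf) \<or>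
      (\<forall>x ye yf. on_line f x ye \<and> on_line g x yf \<longrightarrow> yf \<le> ye)"
  proof (cases "\<sigma> = 1")
    case True
    then have "ye \<le> yf" if "on_line f x ye" "on_line g x yf" for x ye yf
      using ordered[OF that] by simp
    then show ?thesis by blast
  next
    case False
    then have "\<sigma> = -1" using assms(4) square_eq_1_iff by blast
    then have "yf \<le> ye" if "on_line f x ye" "on_line g x yf" for x ye yf
      using ordered[OF that] by simp
    then show ?thesis by blast
  qed
  then show ?thesis using assms(1-3) unfolding related_def by blast
qed

lemma separated_heights_disjoint_related:
  assumes f: "height_fun f (e-1) d S" and g: "height_fun g (b-1) a I"
    and order: "0 < a" "a < b" "b < d" "d < e" "e < 1" and \<sigma>: "\<sigma> * \<sigma> = 1"
    and sep: "\<forall>u\<in>{e-1..a}. \<sigma> * S u < \<sigma> * I u" "\<forall>u\<in>{b..d}. \<sigma> * S u < \<sigma> * I (u-1)"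
  shows "path_image f \<inter> path_image g = {} \<and> related f g"
proof -
  have strict: "\<sigma> * S u < \<sigma> * I w"
    if "u \<in> {e-1..d}" "w \<in> {b-1..a}" "cis (2*pi*u) = cis (2*pi*w)" for u w
    using cis_2pi_eq_window_cases[OF that(3,1,2) order] sep that(1) by auto
  have disjoint: "path_image f \<inter> path_image g = {}"
  proof (rule ccontr)
    assume "path_image f \<inter> path_image g \<noteq> {}"
    then obtain x where x: "x \<in> path_image f" "x \<in> path_image g" by blast
    obtain u where u: "u \<in> {e-1..d}" "x = (cis (2*pi*u), S u)"
      using x(1) f by (auto simp: height_fun_def cyl_graph_def)
    obtain w where w: "w \<in> {b-1..a}" "x = (cis (2*pi*w), I w)"
      using x(2) g by (auto simp: height_fun_def cyl_graph_def)
    show False using strict[OF u(1) w(1)] u(2) w(2) by simp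
  qed
  have ordered: "\<sigma> * ye < \<sigma> * yf" if "on_line f x ye" "on_line g x yf" for x ye yf
  proof -
    have rel: "relint f = cyl_graph S {e-1<..<d}" "relint g = cyl_graph I {b-1<..<a}"
      using f g by (simp_all add: height_fun_def)
    from that(1) obtain u where u: "u \<in> {e-1<..<d}" "cis (2*pi*x) = cis (2*pi*u)" "ye = S u"
      unfolding on_line_cyl_graph[OF rel(1)] by blast
    from that(2) obtain w where w: "w \<in> {b-1<..<a}" "cis (2*pi*x) = cis (2*pi*w)" "yf = I w"
      unfolding on_line_cyl_graph[OF rel(2)] by blast
    show ?thesis using strict[of u w] u w by simp
  qed
  let ?m = "(e - 1 + a) / 2"
  have common_line: "on_line f ?m (S ?m)" "on_line g ?m (I ?m)"
    using f g order cyl_graph_memI[of ?m "{e-1<..<d}" S] cyl_graph_memI[of ?m "{b-1<..<a}" I]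
    by (simp_all add: on_line_def height_fun_def)
  have "\<not> crosses f g"
    using disjoint relint_subset_path_image unfolding crosses_def cross_at_def by blast
  then have "related f g"
    by (rule related_if_sign_ordered[OF _ common_line \<sigma>]) (rule ordered)
  with disjoint show ?thesis by blast
qed

section \<open>Sign of a continuous function on an interval\<close>

lemma continuous_zero_if_sign_change:
  fixes g :: "real \<Rightarrow> real"
  assumes "continuous_on {x..y} g" "x \<le> y" "g x * g y \<le> 0"
  shows "\<exists>z\<in>{x..y}. g z = 0"
proof -
  have "(g x \<le> 0 \<and> 0 \<le> g y) \<or> (g y \<le> 0 \<and> 0 \<le> g x)"
    using assms(3) by (auto simp: mult_le_0_iff)
  then show ?thesis
    using assms(1,2) IVT'[of g x 0 y] IVT2'[of g y 0 x] by force
qed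

lemma continuous_neg_if_no_zero:
  fixes g :: "real \<Rightarrow> real"
  assumes "continuous_on {x..y} g" "g x < 0" "\<forall>u\<in>{x..y}. g u \<noteq> 0" "u \<in> {x..y}"
  shows "g u < 0"
proof (rule ccontr)
  assume "\<not> g u < 0"
  moreover have "continuous_on {x..u} g" using assms(1,4) by (auto intro: continuous_on_subset)
  ultimately obtain z where "z \<in> {x..u}" "g z = 0"
    using continuous_zero_if_sign_change[of x u g] assms(2,4) by (auto simp: mult_le_0_iff)
  then show False using assms(3,4) by auto
qed

text \<open>A single zero at which g changes sign would leave g with different signs at the two ends.\<close>
lemma continuous_neg_if_single_crossing:
  fixes g :: "real \<Rightarrow> real"
  assumes cont: "continuous_on {x..y} g" and gx: "g x < 0" and gy: "g y < 0"
    and unique: "\<forall>z1\<in>{x..y}. \<forall>z2\<in>{x..y}. g z1 = 0 \<longrightarrow> g z2 = 0 \<longrightarrow> z1 = z2"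
    and crossing: "\<forall>z\<in>{x<..<y}. g z = 0 \<longrightarrow> (\<exists>\<epsilon>>0. \<forall>\<delta>. 0 < \<delta> \<and> \<delta> < \<epsilon> \<longrightarrow> g (z - \<delta>) * g (z + \<delta>) < 0)"
    and u: "u \<in> {x..y}"
  shows "g u < 0"
proof (rule ccontr)
  assume "\<not> g u < 0"
  then obtain z where z: "z \<in> {x..u}" "g z = 0"
    using continuous_zero_if_sign_change[of x u g] cont u gx
    by (force intro: continuous_on_subset simp: mult_le_0_iff)
  have zin: "z \<in> {x<..<y}" using z u gx gy by (cases "z = x"; cases "z = y") auto
  have left: "g w < 0" if "w \<in> {x..<z}" for w
    using continuous_neg_if_no_zero[of x w g w] cont gx unique z zin that
    by (force intro: continuous_on_subset)
  have right: "g w < 0" if w: "w \<in> {z<..y}" for w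
  proof (rule ccontr)
    assume "\<not> g w < 0"
    then obtain z' where "z' \<in> {w..y}" "g z' = 0"
      using continuous_zero_if_sign_change[of w y g] cont gy w zin
      by (force intro: continuous_on_subset simp: mult_le_0_iff)
    then show False using unique z zin w by force
  qed
  obtain \<epsilon> where \<epsilon>: "\<epsilon> > 0" "\<forall>\<delta>. 0 < \<delta> \<and> \<delta> < \<epsilon> \<longrightarrow> g (z - \<delta>) * g (z + \<delta>) < 0"
    using crossing zin z by blast
  define \<delta> where "\<delta> = min (\<epsilon>/2) (min ((z - x)/2) ((y - z)/2))"
  have "\<delta> \<le> \<epsilon>/2" "\<delta> \<le> (z - x)/2" "\<delta> \<le> (y - z)/2"
    unfolding \<delta>_def by linarith+
  moreover have "0 < \<delta>" using \<epsilon> zin by (simp add: \<delta>_def)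
  ultimately have "0 < \<delta>" "\<delta> < \<epsilon>" "z - \<delta> \<in> {x..<z}" "z + \<delta> \<in> {z<..y}"
    using \<epsilon> zin by auto
  then show False
    using left right \<epsilon>(2) mult_neg_neg[of "g (z - \<delta>)" "g (z + \<delta>)"] by force
qed

section \<open>Four consecutive edges\<close>

text \<open>The graph of H over u meets the graph of G over W, which may lie one period to the left.\<close>
definition meets_at :: "(real \<Rightarrow> real) \<Rightarrow> (real \<Rightarrow> real) \<Rightarrow> real set \<Rightarrow> real \<Rightarrow> bool" where
  "meets_at H G W u \<longleftrightarrow> (u \<in> W \<and> H u = G u) \<or> (u - 1 \<in> W \<and> H u = G (u - 1))"

lemma meets_at_common_point:
  assumes "u \<in> U" "meets_at H G W u"
  shows "(cis (2*pi*u), H u) \<in> cyl_graph H U \<inter> cyl_graph G W"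
  using assms cyl_graph_memI[of u W G] cyl_graph_memI[of "u - 1" W G] cyl_graph_memI[of u U H]
  by (auto simp: meets_at_def)

lemma meets_at_unique:
  assumes "r - l < 1"
    and once: "\<forall>p q. p \<in> cyl_graph H {l..r} \<inter> cyl_graph G W \<and> q \<in> cyl_graph H {l..r} \<inter> cyl_graph G W \<longrightarrow> p = q"
    and u: "u1 \<in> {l..r}" "u2 \<in> {l..r}" "meets_at H G W u1" "meets_at H G W u2"
  shows "u1 = u2"
proof -
  have "cis (2*pi*u1) = cis (2*pi*u2)"
    using once meets_at_common_point[of u1 "{l..r}" H G W] meets_at_common_point[of u2 "{l..r}" H G W] u
    by auto
  moreover have "\<bar>u1 - u2\<bar> < 1" using assms(1) u(1,2) by (auto simp: abs_less_iff)
  ultimately show ?thesis using cis_2pi_eq_imp_eq by blast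
qed

text \<open>a < b < c < d < e are the x-coordinates of v_i, v_j, v_k, v_s, v_t and I, J, K, S the
  heights of the edges v_iv_j, v_jv_k, v_kv_s, v_sv_t, each over its window [x_q - 1, x_p]; the
  assumptions are what a simple drawing says about these four graphs.\<close>
locale edge_heights =
  fixes a b c d e :: real and I J K S :: "real \<Rightarrow> real"
  assumes order: "0 < a" "a < b" "b < c" "c < d" "d < e" "e < 1"
    and cont_I: "continuous_on {b-1..a} I" and cont_J: "continuous_on {c-1..b} J"
    and cont_K: "continuous_on {d-1..c} K" and cont_S: "continuous_on {e-1..d} S"
    and shared_ends: "I (b-1) = J b" "J (c-1) = K c" "K (d-1) = S d"
    and avoid_vertices: "S b \<noteq> J b" "S c \<noteq> K c" "K b \<noteq> J b" "S a \<noteq> I a"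
    and SJ_meet_once: "\<And>u1 u2. u1 \<in> {e-1..d} \<Longrightarrow> u2 \<in> {e-1..d} \<Longrightarrow>
          meets_at S J {c-1..b} u1 \<Longrightarrow> meets_at S J {c-1..b} u2 \<Longrightarrow> u1 = u2"
    and SK_meet_only_at_d: "\<And>u. u \<in> {e-1..d} \<Longrightarrow> meets_at S K {d-1..c} u \<Longrightarrow> u = d"
    and KJ_meet_only_at_c: "\<And>u. u \<in> {d-1..c} \<Longrightarrow> meets_at K J {c-1..b} u \<Longrightarrow> u = c"
    and SI_meet_once: "\<And>u1 u2. u1 \<in> {e-1..d} \<Longrightarrow> u2 \<in> {e-1..d} \<Longrightarrow>
          meets_at S I {b-1..a} u1 \<Longrightarrow> meets_at S I {b-1..a} u2 \<Longrightarrow> u1 = u2"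
    and SI_meet_crossing: "\<And>u w. u \<in> {e-1<..<d} \<Longrightarrow> w \<in> {b-1<..<a} \<Longrightarrow> w = u \<or> w = u - 1 \<Longrightarrow>
          S u = I w \<Longrightarrow>
          \<exists>\<epsilon>>0. \<forall>\<delta>. 0 < \<delta> \<and> \<delta> < \<epsilon> \<longrightarrow> (S (u - \<delta>) - I (w - \<delta>)) * (S (u + \<delta>) - I (w + \<delta>)) < 0"
begin

lemma S_below_J_at_b:
  assumes S_d: "S d < J (d-1)" and S_e: "S (e-1) < J (e-1)"
  shows "S b < J b"
proof (rule ccontr)
  assume "\<not> S b < J b"
  then have S_b: "S b > J b" using avoid_vertices(1) by simp
  have "K u - J u < 0" if "u \<in> {d-1..b}" for u
  proof (rule continuous_neg_if_no_zero[OF _ _ _ that])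
    show "continuous_on {d-1..b} (\<lambda>u. K u - J u)"
      using order by (intro continuous_intros continuous_on_subset[OF cont_K] continuous_on_subset[OF cont_J]) auto
    show "K (d-1) - J (d-1) < 0" using shared_ends(3) S_d by simp
    show "\<forall>u\<in>{d-1..b}. K u - J u \<noteq> 0"
      using KJ_meet_only_at_c order by (fastforce simp: meets_at_def)
  qed
  then have K_b: "K b < J b" using order by auto
  have S_c: "S c < K c"
  proof (rule ccontr)
    assume "\<not> S c < K c"
    then have "S c > K c" using avoid_vertices(2) by simp
    moreover have "continuous_on {c..d} (\<lambda>u. S u - J (u-1))"
      using order by (intro continuous_intros continuous_on_subset[OF cont_S]
          continuous_on_compose2[OF cont_J, of _ "\<lambda>u. u-1"]) auto
    ultimately obtain u2 where u2: "u2 \<in> {c..d}" "S u2 - J (u2-1) = 0"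
      using continuous_zero_if_sign_change[of c d] order shared_ends(2) S_d by (force simp: mult_le_0_iff)
    have "continuous_on {e-1..b} (\<lambda>u. S u - J u)"
      using order by (intro continuous_intros continuous_on_subset[OF cont_S] continuous_on_subset[OF cont_J]) auto
    then obtain u1 where u1: "u1 \<in> {e-1..b}" "S u1 - J u1 = 0"
      using continuous_zero_if_sign_change[of "e-1" b] order S_b S_e by (force simp: mult_le_0_iff)
    have "u1 = u2"
      using SJ_meet_once[of u1 u2] u1 u2 order by (auto simp: meets_at_def)
    then show False using u1 u2 order by auto
  qed
  have "continuous_on {b..c} (\<lambda>u. S u - K u)"
    using order by (intro continuous_intros continuous_on_subset[OF cont_S] continuous_on_subset[OF cont_K]) auto
  then obtain w where "w \<in> {b..c}" "S w - K w = 0"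
    using continuous_zero_if_sign_change[of b c] order S_b K_b S_c by (force simp: mult_le_0_iff)
  then show False
    using SK_meet_only_at_d[of w] order by (auto simp: meets_at_def)
qed

lemma S_below_I_at_a:
  assumes J_below_I: "\<forall>u\<in>{c-1<..<a}. J u < I u"
    and S_e: "S (e-1) < J (e-1)" and S_b: "S b < J b"
  shows "S a < I a"
proof (rule ccontr)
  assume "\<not> S a < I a"
  then have I_a: "I a < S a" using avoid_vertices(4) by simp
  have "J (e-1) < I (e-1)" using J_below_I order by auto
  then have S_e_I: "S (e-1) - I (e-1) < 0" using S_e by simp
  have cont_SI: "continuous_on {e-1..a} (\<lambda>u. S u - I u)"
    using order by (intro continuous_intros continuous_on_subset[OF cont_S] continuous_on_subset[OF cont_I]) auto
  obtain z where z: "z \<in> {e-1..a}" "S z - I z = 0"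
    using continuous_zero_if_sign_change[OF cont_SI] order S_e_I I_a by (force simp: mult_le_0_iff)
  have "z \<noteq> e-1" "z \<noteq> a" using z S_e_I I_a by auto
  then have J_z: "J z < S z" using J_below_I z order by auto
  have "continuous_on {e-1..b} (\<lambda>u. S u - J u)"
    using order by (intro continuous_intros continuous_on_subset[OF cont_S] continuous_on_subset[OF cont_J]) auto
  then have cont_left: "continuous_on {e-1..z} (\<lambda>u. S u - J u)"
    and cont_right: "continuous_on {z..b} (\<lambda>u. S u - J u)"
    using z order by (auto intro: continuous_on_subset)
  obtain z1 where z1: "z1 \<in> {e-1..z}" "S z1 - J z1 = 0"
    using continuous_zero_if_sign_change[OF cont_left] z(1) S_e J_z by (auto simp: mult_le_0_iff)
  obtain z2 where z2: "z2 \<in> {z..b}" "S z2 - J z2 = 0"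
    using continuous_zero_if_sign_change[OF cont_right] z(1) S_b J_z order by (auto simp: mult_le_0_iff)
  have "z1 = z2"
    using SJ_meet_once[of z1 z2] z1 z2 z(1) order by (auto simp: meets_at_def)
  then show False using z1 z2 J_z by auto
qed

lemma S_below_I_on_common_window:
  assumes J_below_I: "\<forall>u\<in>{c-1<..<a}. J u < I u"
    and S_e: "S (e-1) < J (e-1)" and S_a: "S a < I a" and u: "u \<in> {e-1..a}"
  shows "S u < I u"
proof -
  have "S u - I u < 0"
  proof (rule continuous_neg_if_single_crossing[OF _ _ _ _ _ u])
    show "continuous_on {e-1..a} (\<lambda>u. S u - I u)"
      using order by (intro continuous_intros continuous_on_subset[OF cont_S] continuous_on_subset[OF cont_I]) auto
    have "J (e-1) < I (e-1)" using J_below_I order by auto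
    then show "S (e-1) - I (e-1) < 0" using S_e by simp
    show "S a - I a < 0" using S_a by simp
    show "\<forall>z1\<in>{e-1..a}. \<forall>z2\<in>{e-1..a}. S z1 - I z1 = 0 \<longrightarrow> S z2 - I z2 = 0 \<longrightarrow> z1 = z2"
      using SI_meet_once order by (auto simp: meets_at_def)
    show "\<forall>z\<in>{e-1<..<a}. S z - I z = 0 \<longrightarrow> (\<exists>\<epsilon>>0. \<forall>\<delta>. 0 < \<delta> \<and> \<delta> < \<epsilon> \<longrightarrow>
        (S (z - \<delta>) - I (z - \<delta>)) * (S (z + \<delta>) - I (z + \<delta>)) < 0)"
      using SI_meet_crossing order by auto
  qed
  then show ?thesis by simp
qed

lemma S_below_I_on_shifted_window:
  assumes J_below_I: "\<forall>u\<in>{c-1<..<a}. J u < I u"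
    and S_d: "S d < J (d-1)" and S_b: "S b < J b" and u: "u \<in> {b..d}"
  shows "S u < I (u-1)"
proof -
  have "S u - I (u-1) < 0"
  proof (rule continuous_neg_if_single_crossing[OF _ _ _ _ _ u])
    show "continuous_on {b..d} (\<lambda>u. S u - I (u-1))"
      using order by (intro continuous_intros continuous_on_subset[OF cont_S]
          continuous_on_compose2[OF cont_I, of _ "\<lambda>u. u-1"]) auto
    show "S b - I (b-1) < 0" using S_b shared_ends(1) by simp
    have "J (d-1) < I (d-1)" using J_below_I order by auto
    then show "S d - I (d-1) < 0" using S_d by simp
    show "\<forall>z1\<in>{b..d}. \<forall>z2\<in>{b..d}. S z1 - I (z1-1) = 0 \<longrightarrow> S z2 - I (z2-1) = 0 \<longrightarrow> z1 = z2"
      using SI_meet_once order by (auto simp: meets_at_def)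
    show "\<forall>z\<in>{b<..<d}. S z - I (z-1) = 0 \<longrightarrow> (\<exists>\<epsilon>>0. \<forall>\<delta>. 0 < \<delta> \<and> \<delta> < \<epsilon> \<longrightarrow>
        (S (z - \<delta>) - I (z - \<delta> - 1)) * (S (z + \<delta>) - I (z + \<delta> - 1)) < 0)"
    proof (intro ballI impI)
      fix z assume "z \<in> {b<..<d}" "S z - I (z-1) = 0"
      then have "\<exists>\<epsilon>>0. \<forall>\<delta>. 0 < \<delta> \<and> \<delta> < \<epsilon> \<longrightarrow>
          (S (z - \<delta>) - I (z - 1 - \<delta>)) * (S (z + \<delta>) - I (z - 1 + \<delta>)) < 0"
        using SI_meet_crossing[of z "z-1"] order by auto
      then show "\<exists>\<epsilon>>0. \<forall>\<delta>. 0 < \<delta> \<and> \<delta> < \<epsilon> \<longrightarrow>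
          (S (z - \<delta>) - I (z - \<delta> - 1)) * (S (z + \<delta>) - I (z + \<delta> - 1)) < 0"
        by (simp add: algebra_simps)
    qed
  qed
  then show ?thesis by simp
qed

lemma S_below_I:
  assumes J_below_I: "\<forall>u\<in>{c-1<..<a}. J u < I u"
    and S_d: "S d < J (d-1)" and S_e: "S (e-1) < J (e-1)"
  shows "\<forall>u\<in>{e-1..a}. S u < I u" and "\<forall>u\<in>{b..d}. S u < I (u-1)"
proof -
  have S_b: "S b < J b" using S_below_J_at_b S_d S_e .
  then have "S a < I a" using S_below_I_at_a J_below_I S_e by blast
  then show "\<forall>u\<in>{e-1..a}. S u < I u"
    using S_below_I_on_common_window J_below_I S_e by blast
  show "\<forall>u\<in>{b..d}. S u < I (u-1)"
    using S_below_I_on_shifted_window J_below_I S_d S_b by blast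
qed

text \<open>Flipping all heights (\<sigma> = -1) exchanges the roles of below and above.\<close>

lemma sign_scaled:
  assumes "\<sigma> * \<sigma> = 1"
  shows "edge_heights a b c d e (\<lambda>u. \<sigma> * I u) (\<lambda>u. \<sigma> * J u) (\<lambda>u. \<sigma> * K u) (\<lambda>u. \<sigma> * S u)"
proof -
  have "\<sigma> \<noteq> 0" using assms by auto
  then have cancel: "\<sigma> * x = \<sigma> * y \<longleftrightarrow> x = y" for x y :: real by simp
  have meets: "meets_at (\<lambda>u. \<sigma> * H u) (\<lambda>u. \<sigma> * G u) W u \<longleftrightarrow> meets_at H G W u" for H G W u
    by (simp only: meets_at_def cancel)
  have prod: "(\<sigma> * x - \<sigma> * y) * (\<sigma> * x' - \<sigma> * y') = (x - y) * (x' - y')" for x y x' y' :: real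
  proof -
    have "(\<sigma> * x - \<sigma> * y) * (\<sigma> * x' - \<sigma> * y') = (\<sigma> * \<sigma>) * ((x - y) * (x' - y'))"
      by (simp add: algebra_simps)
    then show ?thesis using assms by simp
  qed
  show ?thesis
    by unfold_locales
      (simp_all only: meets cancel prod order shared_ends avoid_vertices continuous_on_mult_left
        cont_I cont_J cont_K cont_S SJ_meet_once SK_meet_only_at_d KJ_meet_only_at_c SI_meet_once
        SI_meet_crossing not_False_eq_True)
qed

lemma S_beyond_I:
  assumes "\<sigma> * \<sigma> = 1"
    and J_beyond_I: "\<forall>u\<in>{c-1<..<a}. \<sigma> * J u < \<sigma> * I u"
    and S_d: "\<sigma> * S d < \<sigma> * J (d-1)" and S_e: "\<sigma> * S (e-1) < \<sigma> * J (e-1)"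
  shows "\<forall>u\<in>{e-1..a}. \<sigma> * S u < \<sigma> * I u" and "\<forall>u\<in>{b..d}. \<sigma> * S u < \<sigma> * I (u-1)"
proof -
  interpret flipped: edge_heights a b c d e "\<lambda>u. \<sigma> * I u" "\<lambda>u. \<sigma> * J u" "\<lambda>u. \<sigma> * K u" "\<lambda>u. \<sigma> * S u"
    using sign_scaled[OF assms(1)] .
  show "\<forall>u\<in>{e-1..a}. \<sigma> * S u < \<sigma> * I u" "\<forall>u\<in>{b..d}. \<sigma> * S u < \<sigma> * I (u-1)"
    using flipped.S_below_I J_beyond_I S_d S_e by simp_all
qed

end

section \<open>Flags\<close>

lemma flag_conjuncts:
  assumes "flag n v E"
  shows "\<forall>i\<in>{1..n}. v i \<in> Cyl" "\<forall>i\<in>{1..n}. xc (v i) \<noteq> 0"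
    "\<forall>i j. 1 \<le> i \<and> i < j \<and> j \<le> n \<longrightarrow> xc (v i) < xc (v j)"
    "\<forall>i j. 1 \<le> i \<and> i < j \<and> j \<le> n \<longrightarrow>
        xmono (E i j) \<and> pathstart (E i j) = v i \<and> pathfinish (E i j) = v j \<and>
        (\<forall>k\<in>{1..n}. k \<noteq> i \<and> k \<noteq> j \<longrightarrow> v k \<notin> path_image (E i j)) \<and>
        vline 0 \<inter> relint (E i j) \<noteq> {}"
    "\<forall>i j s t. 1 \<le> i \<and> i < j \<and> j \<le> n \<and> 1 \<le> s \<and> s < t \<and> t \<le> n \<and> (i, j) \<noteq> (s, t) \<longrightarrow>
        (\<forall>p q. p \<in> path_image (E i j) \<inter> path_image (E s t) \<and>
               q \<in> path_image (E i j) \<inter> path_image (E s t) \<longrightarrow> p = q) \<and>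
        (\<forall>p \<in> path_image (E i j) \<inter> path_image (E s t).
           (\<exists>m \<in> {i, j} \<inter> {s, t}. p = v m) \<or> cross_at (E i j) (E s t) p)"
  using assms unfolding flag_def by simp_all

lemma flag_vertex:
  assumes "flag n v E" "m \<in> {1..n}"
  shows "0 < xc (v m)" "xc (v m) < 1" "v m = (cis (2*pi*xc (v m)), yc (v m))"
proof -
  have "v m \<in> Cyl" "xc (v m) \<noteq> 0" using flag_conjuncts(1,2)[OF assms(1)] assms(2) by auto
  then show "0 < xc (v m)" "xc (v m) < 1" "v m = (cis (2*pi*xc (v m)), yc (v m))"
    using xc_Cyl[of "v m"] Cyl_eq_cis_xc[of "v m"] by auto
qed

lemma flag_xc_less: "flag n v E \<Longrightarrow> 1 \<le> p \<Longrightarrow> p < q \<Longrightarrow> q \<le> n \<Longrightarrow> xc (v p) < xc (v q)"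
  using flag_conjuncts(3) by blast

lemma flag_edgeD:
  assumes "flag n v E" "1 \<le> p" "p < q" "q \<le> n"
  shows "xmono (E p q)" "pathstart (E p q) = v p" "pathfinish (E p q) = v q"
    "\<And>m. m \<in> {1..n} \<Longrightarrow> m \<noteq> p \<Longrightarrow> m \<noteq> q \<Longrightarrow> v m \<notin> path_image (E p q)"
    "vline 0 \<inter> relint (E p q) \<noteq> {}"
  using flag_conjuncts(4)[OF assms(1)] assms(2-4) by blast+

lemma flag_edge_pairD:
  assumes "flag n v E" "1 \<le> p" "p < q" "q \<le> n" "1 \<le> p'" "p' < q'" "q' \<le> n" "(p, q) \<noteq> (p', q')"
  shows "\<And>x y. x \<in> path_image (E p q) \<inter> path_image (E p' q') \<Longrightarrow>
      y \<in> path_image (E p q) \<inter> path_image (E p' q') \<Longrightarrow> x = y"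
    and "\<And>x. x \<in> path_image (E p q) \<inter> path_image (E p' q') \<Longrightarrow>
      (\<exists>m \<in> {p, q} \<inter> {p', q'}. x = v m) \<or> cross_at (E p q) (E p' q') x"
  using flag_conjuncts(5)[OF assms(1)] assms(2-8) by blast+

lemma flag_edge_height:
  assumes "flag n v E" "1 \<le> p" "p < q" "q \<le> n"
  obtains H where "height_fun (E p q) (xc (v q) - 1) (xc (v p)) H"
    "H (xc (v p)) = yc (v p)" "H (xc (v q) - 1) = yc (v q)"
proof -
  have "p \<in> {1..n}" "q \<in> {1..n}" using assms by auto
  then have ends: "pathstart (E p q) = (cis (2*pi*xc (v p)), yc (v p))"
      "pathfinish (E p q) = (cis (2*pi*xc (v q)), yc (v q))"
    and x: "0 < xc (v p)" "xc (v q) < 1"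
    using flag_edgeD(2,3)[OF assms] flag_vertex[OF assms(1)] by auto
  show thesis
    by (rule xmono_graph[OF flag_edgeD(1,5)[OF assms] ends x(1) flag_xc_less[OF assms] x(2)]) (fact that)
qed

lemma flag_height_avoids_vertex:
  assumes fl: "flag n v E" and pq: "1 \<le> p" "p < q" "q \<le> n"
    and m: "m \<in> {1..n}" "m \<noteq> p" "m \<noteq> q"
    and H: "height_fun (E p q) l r H" and x: "xc (v m) \<in> {l..r}"
  shows "H (xc (v m)) \<noteq> yc (v m)"
proof
  assume "H (xc (v m)) = yc (v m)"
  then have "v m \<in> path_image (E p q)"
    using cyl_graph_memI[OF x, of H] H flag_vertex(3)[OF fl m(1)] by (simp add: height_fun_def)
  then show False using flag_edgeD(4)[OF fl pq m] by blast
qed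

lemma flag_heights_meet_once:
  assumes fl: "flag n v E" and pq: "1 \<le> p" "p < q" "q \<le> n"
    and pq': "1 \<le> p'" "p' < q'" "q' \<le> n" "(p, q) \<noteq> (p', q')"
    and H: "height_fun (E p q) l r H" "r - l < 1" and G: "height_fun (E p' q') l' r' G"
    and u: "u1 \<in> {l..r}" "u2 \<in> {l..r}" "meets_at H G {l'..r'} u1" "meets_at H G {l'..r'} u2"
  shows "u1 = u2"
proof (rule meets_at_unique[OF H(2) _ u])
  show "\<forall>x y. x \<in> cyl_graph H {l..r} \<inter> cyl_graph G {l'..r'} \<and> y \<in> cyl_graph H {l..r} \<inter> cyl_graph G {l'..r'} \<longrightarrow> x = y"
    using flag_edge_pairD(1)[OF fl pq pq'] H(1) G unfolding height_fun_def by blast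
qed

lemma flag_heights_crossing:
  assumes fl: "flag n v E" and pq: "1 \<le> p" "p < q" "q \<le> n"
    and pq': "1 \<le> p'" "p' < q'" "q' \<le> n" and disjoint: "{p, q} \<inter> {p', q'} = {}"
    and H: "height_fun (E p q) l r H" "r - l \<le> 1" and G: "height_fun (E p' q') l' r' G" "r' - l' \<le> 1"
    and u: "u \<in> {l<..<r}" and w: "w \<in> {l'<..<r'}" "cis (2*pi*w) = cis (2*pi*u)" and meet: "H u = G w"
  shows "\<exists>\<epsilon>>0. \<forall>\<delta>. 0 < \<delta> \<and> \<delta> < \<epsilon> \<longrightarrow> (H (u - \<delta>) - G (w - \<delta>)) * (H (u + \<delta>) - G (w + \<delta>)) < 0"
proof (rule cross_at_height_sign[OF _ H(2) _ G(2) u w])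
  show relH: "relint (E p q) = cyl_graph H {l<..<r}" and relG: "relint (E p' q') = cyl_graph G {l'<..<r'}"
    using H(1) G(1) by (simp_all add: height_fun_def)
  have "(cis (2*pi*u), H u) \<in> relint (E p q) \<inter> relint (E p' q')"
    using cyl_graph_memI[OF u, of H] cyl_graph_memI[OF w(1), of G] w(2) meet relH relG by simp
  then show "cross_at (E p q) (E p' q') (cis (2*pi*u), H u)"
    using flag_edge_pairD(2)[OF fl pq pq'] disjoint relint_subset_path_image by blast
qed

lemma flag_adjacent_relint_disjoint:
  assumes fl: "flag n v E" and idx: "1 \<le> i" "i < j" "j < k" "k \<le> n"
    and "\<not> crosses (E j k) (E i j) \<or> \<not> crosses (E i j) (E j k)"
  shows "relint (E i j) \<inter> relint (E j k) = {}"
proof (rule ccontr)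
  assume "relint (E i j) \<inter> relint (E j k) \<noteq> {}"
  then obtain x where x: "x \<in> relint (E i j)" "x \<in> relint (E j k)" by blast
  have "x \<noteq> v j"
    using x(1) arc_pathfinish_notin_relint[of "E i j"] flag_edgeD(1,3)[OF fl idx(1,2)] idx
    by (auto simp: xmono_def)
  moreover have "x \<in> path_image (E i j) \<inter> path_image (E j k)"
    using x relint_subset_path_image by blast
  moreover have j: "1 \<le> j" "j \<le> n" and "{i, j} \<inter> {j, k} = {j}" "{j, k} \<inter> {i, j} = {j}"
    and "(i, j) \<noteq> (j, k)" "(j, k) \<noteq> (i, j)" using idx by auto
  ultimately have "cross_at (E i j) (E j k) x" "cross_at (E j k) (E i j) x"
    using flag_edge_pairD(2)[OF fl idx(1,2) j(2) j(1) idx(3,4), of x]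
      flag_edge_pairD(2)[OF fl j(1) idx(3,4) idx(1,2) j(2), of x] by auto
  then show False using assms(6) unfolding crosses_def by blast
qed

lemma flag_edge_heights:
  assumes fl: "flag n v E" and idx: "1 \<le> i" "i < j" "j < k" "k < s" "s < t" "t \<le> n"
  obtains I J K S where "height_fun (E i j) (xc (v j) - 1) (xc (v i)) I"
    "height_fun (E j k) (xc (v k) - 1) (xc (v j)) J" "height_fun (E s t) (xc (v t) - 1) (xc (v s)) S"
    "S (xc (v s)) = yc (v s)" "S (xc (v t) - 1) = yc (v t)"
    "edge_heights (xc (v i)) (xc (v j)) (xc (v k)) (xc (v s)) (xc (v t)) I J K S"
proof -
  have pairs: "1 \<le> i" "i < j" "j \<le> n" "1 \<le> j" "j < k" "k \<le> n" "1 \<le> k" "k < s" "s \<le> n"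
    "1 \<le> s" "s < t" "t \<le> n" using idx by auto
  obtain I where I: "height_fun (E i j) (xc (v j) - 1) (xc (v i)) I"
    "I (xc (v i)) = yc (v i)" "I (xc (v j) - 1) = yc (v j)"
    using flag_edge_height[OF fl pairs(1-3)] by blast
  obtain J where J: "height_fun (E j k) (xc (v k) - 1) (xc (v j)) J"
    "J (xc (v j)) = yc (v j)" "J (xc (v k) - 1) = yc (v k)"
    using flag_edge_height[OF fl pairs(4-6)] by blast
  obtain K where K: "height_fun (E k s) (xc (v s) - 1) (xc (v k)) K"
    "K (xc (v k)) = yc (v k)" "K (xc (v s) - 1) = yc (v s)"
    using flag_edge_height[OF fl pairs(7-9)] by blast
  obtain S where S: "height_fun (E s t) (xc (v t) - 1) (xc (v s)) S"
    "S (xc (v s)) = yc (v s)" "S (xc (v t) - 1) = yc (v t)"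
    using flag_edge_height[OF fl pairs(10-12)] by blast
  define a b c d e where "a = xc (v i)" "b = xc (v j)" "c = xc (v k)" "d = xc (v s)" "e = xc (v t)"
  have order: "0 < a" "a < b" "b < c" "c < d" "d < e" "e < 1"
    using flag_vertex(1)[OF fl, of i] flag_vertex(2)[OF fl, of t] flag_xc_less[OF fl] idx
    unfolding a_b_c_d_e_def by auto
  have "edge_heights a b c d e I J K S"
  proof
    show "0 < a" "a < b" "b < c" "c < d" "d < e" "e < 1" by (fact order)+
    show "continuous_on {b-1..a} I" "continuous_on {c-1..b} J" "continuous_on {d-1..c} K" "continuous_on {e-1..d} S"
      using I(1) J(1) K(1) S(1) by (simp_all add: height_fun_def a_b_c_d_e_def)
    show "I (b-1) = J b" "J (c-1) = K c" "K (d-1) = S d"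
      using I J K S by (simp_all add: a_b_c_d_e_def)
    show "S b \<noteq> J b" "S c \<noteq> K c" "K b \<noteq> J b" "S a \<noteq> I a"
      using flag_height_avoids_vertex[OF fl pairs(10-12) _ _ _ S(1), of j]
        flag_height_avoids_vertex[OF fl pairs(10-12) _ _ _ S(1), of k]
        flag_height_avoids_vertex[OF fl pairs(7-9) _ _ _ K(1), of j]
        flag_height_avoids_vertex[OF fl pairs(10-12) _ _ _ S(1), of i]
        I(2) J(2) K(2) order idx by (auto simp: a_b_c_d_e_def)
    show "u1 = u2" if "u1 \<in> {e-1..d}" "u2 \<in> {e-1..d}"
      "meets_at S J {c-1..b} u1" "meets_at S J {c-1..b} u2" for u1 u2
      using flag_heights_meet_once[OF fl pairs(10-12) pairs(4-6) _ S(1) _ J(1)] that order idx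
      by (simp add: a_b_c_d_e_def)
    show "u = d" if "u \<in> {e-1..d}" "meets_at S K {d-1..c} u" for u
      using flag_heights_meet_once[OF fl pairs(10-12) pairs(7-9) _ S(1) _ K(1), of u d] that order idx K(3) S(2)
      by (simp add: a_b_c_d_e_def meets_at_def)
    show "u = c" if "u \<in> {d-1..c}" "meets_at K J {c-1..b} u" for u
      using flag_heights_meet_once[OF fl pairs(7-9) pairs(4-6) _ K(1) _ J(1), of u c] that order idx K(2) J(3)
      by (simp add: a_b_c_d_e_def meets_at_def)
    show "u1 = u2" if "u1 \<in> {e-1..d}" "u2 \<in> {e-1..d}"
      "meets_at S I {b-1..a} u1" "meets_at S I {b-1..a} u2" for u1 u2
      using flag_heights_meet_once[OF fl pairs(10-12) pairs(1-3) _ S(1) _ I(1)] that order idx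
      by (simp add: a_b_c_d_e_def)
    show "\<exists>\<epsilon>>0. \<forall>\<delta>. 0 < \<delta> \<and> \<delta> < \<epsilon> \<longrightarrow> (S (u - \<delta>) - I (w - \<delta>)) * (S (u + \<delta>) - I (w + \<delta>)) < 0"
      if "u \<in> {e-1<..<d}" "w \<in> {b-1<..<a}" "w = u \<or> w = u - 1" "S u = I w" for u w
    proof (rule flag_heights_crossing[OF fl pairs(10-12) pairs(1-3) _ S(1) _ I(1)])
      show "cis (2*pi*w) = cis (2*pi*u)" using that(3) by auto
    qed (use that order idx in \<open>auto simp: a_b_c_d_e_def\<close>)
  qed
  then show thesis using that I(1) J(1) S by (simp add: a_b_c_d_e_def)
qed

lemma flag_below_above_iff_height:
  assumes fl: "flag n v E" and idx: "1 \<le> j" "j < k" "k < m" "m \<le> n"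
    and J: "height_fun (E j k) (xc (v k) - 1) (xc (v j)) J"
  shows "below (v m) (E j k) \<longleftrightarrow> yc (v m) < J (xc (v m) - 1)"
    and "above (v m) (E j k) \<longleftrightarrow> J (xc (v m) - 1) < yc (v m)"
proof -
  have rel: "relint (E j k) = cyl_graph J {xc (v k) - 1<..<xc (v j)}"
    using J by (simp add: height_fun_def)
  have "j \<in> {1..n}" "m \<in> {1..n}" using idx by auto
  then have "0 < xc (v j)" "xc (v m) < 1" using flag_vertex(1,2)[OF fl] by blast+
  moreover have "xc (v j) < xc (v k)" "xc (v k) < xc (v m)" using flag_xc_less[OF fl] idx by simp_all
  ultimately have "xc (v j) - (xc (v k) - 1) \<le> 1" "xc (v m) - 1 \<in> {xc (v k) - 1<..<xc (v j)}"
    by auto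
  then show "below (v m) (E j k) \<longleftrightarrow> yc (v m) < J (xc (v m) - 1)"
    and "above (v m) (E j k) \<longleftrightarrow> J (xc (v m) - 1) < yc (v m)"
    using below_iff_height[OF rel] above_iff_height[OF rel] by simp_all
qed

lemma flag_far_edge_disjoint_related:
  assumes fl: "flag n v E" and idx: "1 \<le> i" "i < j" "j < k" "k < s" "s < t" "t \<le> n"
    and orient: "(prec (E j k) (E i j) \<and> below (v s) (E j k) \<and> below (v t) (E j k)) \<or>
                 (prec (E i j) (E j k) \<and> above (v s) (E j k) \<and> above (v t) (E j k))"
  shows "path_image (E s t) \<inter> path_image (E i j) = {} \<and> related (E s t) (E i j)"
proof -
  obtain I J K S where I: "height_fun (E i j) (xc (v j) - 1) (xc (v i)) I"
    and J: "height_fun (E j k) (xc (v k) - 1) (xc (v j)) J"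
    and S: "height_fun (E s t) (xc (v t) - 1) (xc (v s)) S" "S (xc (v s)) = yc (v s)" "S (xc (v t) - 1) = yc (v t)"
    and heights: "edge_heights (xc (v i)) (xc (v j)) (xc (v k)) (xc (v s)) (xc (v t)) I J K S"
    by (rule flag_edge_heights[OF fl idx])
  define a b c d e where "a = xc (v i)" "b = xc (v j)" "c = xc (v k)" "d = xc (v s)" "e = xc (v t)"
  interpret edge_heights a b c d e I J K S
    using heights by (simp add: a_b_c_d_e_def)
  have relI: "relint (E i j) = cyl_graph I {b-1<..<a}" and relJ: "relint (E j k) = cyl_graph J {c-1<..<b}"
    using I J by (simp_all add: height_fun_def a_b_c_d_e_def)
  have "\<not> crosses (E j k) (E i j) \<or> \<not> crosses (E i j) (E j k)"
    using orient by (auto simp: prec_def related_def)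
  then have adjacent: "relint (E i j) \<inter> relint (E j k) = {}"
    using flag_adjacent_relint_disjoint[OF fl idx(1-3)] idx by simp
  have win: "b - (c - 1) \<le> 1" "a - (b - 1) \<le> 1"
    "\<And>u. u \<in> {c-1<..<a} \<Longrightarrow> u \<in> {c-1<..<b} \<and> u \<in> {b-1<..<a}"
    using order by auto
  have s_jk: "below (v s) (E j k) \<longleftrightarrow> S d < J (d-1)" "above (v s) (E j k) \<longleftrightarrow> J (d-1) < S d"
    and t_jk: "below (v t) (E j k) \<longleftrightarrow> S (e-1) < J (e-1)" "above (v t) (E j k) \<longleftrightarrow> J (e-1) < S (e-1)"
    using flag_below_above_iff_height[OF fl _ idx(3,4)] flag_below_above_iff_height[OF fl _ idx(3)]
      idx J S(2,3) by (simp_all add: a_b_c_d_e_def)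
  obtain \<sigma> :: real where \<sigma>: "\<sigma> * \<sigma> = 1" and oriented: "\<forall>u\<in>{c-1<..<a}. \<sigma> * J u < \<sigma> * I u"
    "\<sigma> * S d < \<sigma> * J (d-1)" "\<sigma> * S (e-1) < \<sigma> * J (e-1)"
  proof (cases "prec (E j k) (E i j) \<and> below (v s) (E j k) \<and> below (v t) (E j k)")
    case True
    have "\<forall>u\<in>{c-1<..<a}. J u < I u"
      using prec_heights_less[OF relJ win(1) relI win(2)] True adjacent win(3) by (simp add: Int_commute)
    then show thesis using that[of 1] True s_jk t_jk by simp
  next
    case False
    then have "prec (E i j) (E j k) \<and> above (v s) (E j k) \<and> above (v t) (E j k)" using orient by blast
    moreover have "\<forall>u\<in>{c-1<..<a}. I u < J u"
      using prec_heights_less[OF relI win(2) relJ win(1)] calculation adjacent win(3) by simp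
    ultimately show thesis using that[of "-1"] s_jk t_jk by simp
  qed
  have "height_fun (E s t) (e-1) d S" "height_fun (E i j) (b-1) a I" "b < d"
    using S(1) I order by (simp_all add: a_b_c_d_e_def)
  then show ?thesis
    using separated_heights_disjoint_related[OF _ _ order(1,2) _ order(5,6) \<sigma> S_beyond_I[OF \<sigma> oriented]]
    by blast
qed

theorem claim15:
  fixes n :: nat and v :: "nat \<Rightarrow> pt" and E :: "nat \<Rightarrow> nat \<Rightarrow> real \<Rightarrow> pt"
    and i j k :: nat
  assumes "flag n v E"
    and "1 \<le> i" and "i < j" and "j < k" and "k \<le> n"
  shows "(good_upper n v E i j k \<longrightarrow>
            (\<forall>s t. s \<in> Vminus n v E j k \<and> t \<in> Vminus n v E j k \<and> s < t \<longrightarrow>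
               path_image (E s t) \<inter> path_image (E i j) = {} \<and> related (E s t) (E i j))) \<and>
         (good_lower n v E i j k \<longrightarrow>
            (\<forall>s t. s \<in> Vplus n v E j k \<and> t \<in> Vplus n v E j k \<and> s < t \<longrightarrow>
               path_image (E s t) \<inter> path_image (E i j) = {} \<and> related (E s t) (E i j)))"
proof (rule conjI; intro impI allI)
  fix s t
  assume "good_upper n v E i j k" "s \<in> Vminus n v E j k \<and> t \<in> Vminus n v E j k \<and> s < t"
  then have "k < s" "s < t" "t \<le> n" "prec (E j k) (E i j) \<and> below (v s) (E j k) \<and> below (v t) (E j k)"
    by (auto simp: Vminus_def good_upper_def)
  then show "path_image (E s t) \<inter> path_image (E i j) = {} \<and> related (E s t) (E i j)"
    using flag_far_edge_disjoint_related[OF assms(1-4)] by blast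
next
  fix s t
  assume "good_lower n v E i j k" "s \<in> Vplus n v E j k \<and> t \<in> Vplus n v E j k \<and> s < t"
  then have "k < s" "s < t" "t \<le> n" "prec (E i j) (E j k) \<and> above (v s) (E j k) \<and> above (v t) (E j k)"
    by (auto simp: Vplus_def good_lower_def)
  then show "path_image (E s t) \<inter> path_image (E i j) = {} \<and> related (E s t) (E i j)"
    using flag_far_edge_disjoint_related[OF assms(1-4)] by blast
qed

end
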